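(* Consider the Bregman proximal augmented Lagrangian method described in the context, with $\psi,\phi$ Legendre and $g=\delta_{-\mathcal{C}}$ for a closed convex cone $\mathcal{C}\subseteq\mathbb{R}^m$ whose dual cone satisfies $\mathcal{C}^*\subseteq\operatorname{dom}\phi$. Let $(x^\star,y^\star)$ be a saddle point of $L$ with $x^\star\in\operatorname{dom}\psi$, $y^\star\in\operatorname{dom}\phi$, and let $R:=2\|y^\star\|+1$. Then for every $K\ge0$, with $\breve s^K=\frac{\sum_{k=0}^K\sigma_ks^k}{\sum_{k=0}^K\sigma_k}$, $$\max\Big\{|f(\breve s^K)-f(x^\star)|,\ \operatorname{dist}(\mathcal{A}(\breve s^K),-\mathcal{C})\Big\}\le\frac{1}{\sum_{k=0}^K\sigma_k}\Big(D_\psi(x^\star,x^0)+\sup_{y\in\mathcal{C}^*\cap B_R}D_\phi(y,y^0)\Big).$$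
   Context: Let $f\in\Gamma_0(\mathbb{R}^n)$, $g\in\Gamma_0(\mathbb{R}^m)$ (proper lsc convex), $A\in\mathbb{R}^{m\times n}$, $b\in\mathbb{R}^m$, $\mathcal{A}(x)=Ax-b$. $L(x,y)=f(x)+\langle\mathcal{A}(x),y\rangle-g^*(y)$; KKT operator $T(x,y)=(\partial f(x)+A^\top y)\times(\partial g^*(y)+b-Ax)$ (maximal monotone). $\delta_S$ is the indicator function of a set $S$; the dual cone is $\mathcal{C}^*=\{y:\langle y,c\rangle\ge0\ \forall c\in\mathcal{C}\}$, so $g^*=\delta_{\mathcal{C}^*}$; $\operatorname{dist}$ is Euclidean distance and $B_R$ the closed ball of radius $R$ at $0$. A function $h\in\Gamma_0$ is Legendre if essentially smooth ($\operatorname{int}\operatorname{dom}h\ne\emptyset$, differentiable there, $\|\nabla h(z^\nu)\|\to\infty$ whenever $\operatorname{int}\operatorname{dom}h\ni z^\nu\to z\in\operatorname{bdry}\operatorname{dom}h$) and essentially strictly convex (strictly convex on every convex subset of $\operatorname{dom}\partial h$); $\nabla h^*$ is the inverse of $\nabla h$ on interiors of domains. $D_h(a,c)=h(a)-h(c)-\langle\nabla h(c),a-c\rangle$ for $a\in\operatorname{dom}h$, $c\in\operatorname{int}\operatorname{dom}h$, $+\infty$ otherwise. Let $\psi\in\Gamma_0(\mathbb{R}^n)$, $\phi\in\Gamma_0(\mathbb{R}^m)$ be Legendre, $\Phi(x,y)=\psi(x)+\phi(y)$, and assume $\operatorname{int}\operatorname{dom}\Phi\cap\operatorname{dom}T\ne\emptyset$.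 Bregman proximal augmented Lagrangian method: given $x^0\in\operatorname{int}\operatorname{dom}\psi$, $y^0\in\operatorname{int}\operatorname{dom}\phi$, step sizes $\sigma_k\ge\sigma>0$ and $\rho_k\in[0,1)$, it generates $s^k\in\operatorname{dom}\psi$, $x^{k+1},y^{k+1},v^k,u^k$ with $(v^k,u^k)\in T(s^k,y^{k+1})$, $x^{k+1}=\nabla\psi^*(\nabla\psi(x^k)-\sigma_kv^k)\in\operatorname{int}\operatorname{dom}\psi$, $y^{k+1}=\nabla\phi^*(\nabla\phi(y^k)-\sigma_ku^k)\in\operatorname{int}\operatorname{dom}\phi$, and $D_\psi(s^k,x^{k+1})\le\rho_k\big(D_\psi(s^k,x^k)+D_\phi(y^{k+1},y^k)\big)$. *)

theory Defs
  imports "HOL-Analysis.Analysis"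
begin

(* Extended-real-valued functions on a Euclidean space; +\<infinity> encodes "outside the domain". *)

definition edom :: "('a \<Rightarrow> ereal) \<Rightarrow> 'a set" where
  "edom h = {x. h x < \<infinity>}"

definition eproper :: "('a \<Rightarrow> ereal) \<Rightarrow> bool" where
  "eproper h \<longleftrightarrow> (\<forall>x. h x \<noteq> -\<infinity>) \<and> (\<exists>x. h x < \<infinity>)"

definition econvex :: "('a::real_vector \<Rightarrow> ereal) \<Rightarrow> bool" where
  "econvex h \<longleftrightarrow> convex {(x, t::real). h x \<le> ereal t}"

definition elsc :: "('a::metric_space \<Rightarrow> ereal) \<Rightarrow> bool" where
  "elsc h \<longleftrightarrow> (\<forall>x X. X \<longlonglongrightarrow> x \<longrightarrow> h x \<le> liminf (\<lambda>k. h (X k)))"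

definition Gamma0 :: "('a::real_normed_vector \<Rightarrow> ereal) \<Rightarrow> bool" where
  "Gamma0 h \<longleftrightarrow> eproper h \<and> elsc h \<and> econvex h"

definition eindicator :: "'a set \<Rightarrow> 'a \<Rightarrow> ereal" where
  "eindicator S x = (if x \<in> S then 0 else \<infinity>)"

definition econj :: "('a::real_inner \<Rightarrow> ereal) \<Rightarrow> 'a \<Rightarrow> ereal" where
  "econj h y = (SUP x. ereal (inner x y) - h x)"

definition esubdiff :: "('a::real_inner \<Rightarrow> ereal) \<Rightarrow> 'a \<Rightarrow> 'a set" where
  "esubdiff h x = {v. h x \<noteq> \<infinity> \<and> h x \<noteq> -\<infinity> \<and>
                      (\<forall>z. h z \<ge> h x + ereal (inner v (z - x)))}"

definition dual_cone :: "'a::real_inner set \<Rightarrow> 'a set" where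
  "dual_cone C = {y. \<forall>c\<in>C. inner y c \<ge> 0}"

(* gradient of h at z (meaningful where the finite part of h is differentiable) *)
definition egrad :: "('a::real_inner \<Rightarrow> ereal) \<Rightarrow> 'a \<Rightarrow> 'a" where
  "egrad h z = (THE D. GDERIV (\<lambda>w. real_of_ereal (h w)) z :> D)"

definition essentially_smooth :: "('a::euclidean_space \<Rightarrow> ereal) \<Rightarrow> bool" where
  "essentially_smooth h \<longleftrightarrow>
     interior (edom h) \<noteq> {} \<and>
     (\<forall>z\<in>interior (edom h). \<exists>D. GDERIV (\<lambda>w. real_of_ereal (h w)) z :> D) \<and>
     (\<forall>Z z. (\<forall>k. Z k \<in> interior (edom h)) \<longrightarrow> Z \<longlonglongrightarrow> z \<longrightarrow> z \<in> frontier (edom h) \<longrightarrow>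
            filterlim (\<lambda>k. norm (egrad h (Z k))) at_top sequentially)"

definition strictly_convex_on_e :: "'a::real_vector set \<Rightarrow> ('a \<Rightarrow> ereal) \<Rightarrow> bool" where
  "strictly_convex_on_e S h \<longleftrightarrow>
     (\<forall>x\<in>S. \<forall>y\<in>S. \<forall>t::real. x \<noteq> y \<longrightarrow> 0 < t \<longrightarrow> t < 1 \<longrightarrow>
        h (t *\<^sub>R x + (1 - t) *\<^sub>R y) < ereal t * h x + ereal (1 - t) * h y)"

definition essentially_strictly_convex :: "('a::real_inner \<Rightarrow> ereal) \<Rightarrow> bool" where
  "essentially_strictly_convex h \<longleftrightarrow>
     (\<forall>S. convex S \<longrightarrow> S \<subseteq> {x. esubdiff h x \<noteq> {}} \<longrightarrow> strictly_convex_on_e S h)"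

definition Legendre :: "('a::euclidean_space \<Rightarrow> ereal) \<Rightarrow> bool" where
  "Legendre h \<longleftrightarrow> Gamma0 h \<and> essentially_smooth h \<and> essentially_strictly_convex h"

definition bregman :: "('a::euclidean_space \<Rightarrow> ereal) \<Rightarrow> 'a \<Rightarrow> 'a \<Rightarrow> ereal" where
  "bregman h a c =
     (if a \<in> edom h \<and> c \<in> interior (edom h)
      then h a - h c - ereal (inner (egrad h c) (a - c)) else \<infinity>)"

definition lagr :: "(real^'n \<Rightarrow> ereal) \<Rightarrow> (real^'m \<Rightarrow> ereal) \<Rightarrow> real^'n^'m \<Rightarrow> real^'m
                    \<Rightarrow> real^'n \<Rightarrow> real^'m \<Rightarrow> ereal" where
  "lagr f g A b x y = f x + ereal (inner (A *v x - b) y) - econj g y"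

definition saddle_point :: "(real^'n \<Rightarrow> ereal) \<Rightarrow> (real^'m \<Rightarrow> ereal) \<Rightarrow> real^'n^'m \<Rightarrow> real^'m
                    \<Rightarrow> real^'n \<Rightarrow> real^'m \<Rightarrow> bool" where
  "saddle_point f g A b xs ys \<longleftrightarrow>
     (\<forall>x y. lagr f g A b xs y \<le> lagr f g A b xs ys \<and> lagr f g A b xs ys \<le> lagr f g A b x ys)"

definition kkt :: "(real^'n \<Rightarrow> ereal) \<Rightarrow> (real^'m \<Rightarrow> ereal) \<Rightarrow> real^'n^'m \<Rightarrow> real^'m
                    \<Rightarrow> real^'n \<Rightarrow> real^'m \<Rightarrow> ((real^'n) \<times> (real^'m)) set" where
  "kkt f g A b x y =
     {(p + transpose A *v y, q + b - A *v x) | p q. p \<in> esubdiff f x \<and> q \<in> esubdiff (econj g) y}"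

end

theory Submission
  imports Defs
begin

(*
  Writing D(z, w) for D_psi(z, x^0) + D_phi(w, y^0), the three-point identity of Bregman distances
  turns the monotonicity of the KKT operator at (s^k, y^(k+1)) into the telescoping estimate
    sigma_k (L(s^k, w) - L(z, y^(k+1))) <= [D_psi(z, x^k) + D_phi(w, y^k)]
                                          - [D_psi(z, x^(k+1)) + D_phi(w, y^(k+1))]
  for every feasible z and every w in the dual cone; the inexactness criterion with rho_k <= 1
  absorbs the error terms. Summing and applying Jensen's inequality to the ergodic average gives
    S (f(s) - f(z) + <A s - b, w>) <= D(z, w).
  With z = xs, the saddle inequality f(xs) <= f(s) + <A s - b, ys> and the test points w = 0,
  w = 2 ys and w = ys + w1, where w1 is a unit vector of the dual cone with
  dist(A s - b, -C) <= <A s - b, w1>, bound |f(s) - f(xs)| and the infeasibility.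
*)

lemma eproper_edom_eq_ereal:
  assumes "eproper h" "x \<in> edom h"
  shows "h x = ereal (real_of_ereal (h x))"
  using assms unfolding eproper_def edom_def by (cases "h x") auto

lemma econvex_convex_on_edom:
  assumes "eproper h" "econvex h"
  shows "convex_on (edom h) (\<lambda>w. real_of_ereal (h w))"
proof -
  have comb: "h (u *\<^sub>R a + v *\<^sub>R c) \<le> ereal (u * real_of_ereal (h a) + v * real_of_ereal (h c))"
    if "a \<in> edom h" "c \<in> edom h" "0 \<le> u" "0 \<le> v" "u + v = 1" for a c u v
  proof -
    have "u *\<^sub>R (a, real_of_ereal (h a)) + v *\<^sub>R (c, real_of_ereal (h c)) \<in> {(x, t). h x \<le> ereal t}"
      using assms(2) that eproper_edom_eq_ereal[OF assms(1)] unfolding econvex_def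
      by (intro convexD) auto
    then show ?thesis by simp
  qed
  have "convex (edom h)"
    by (rule convexI) (use comb in \<open>force simp: edom_def\<close>)
  moreover have "real_of_ereal (h ((1 - t) *\<^sub>R a + t *\<^sub>R c))
      \<le> (1 - t) * real_of_ereal (h a) + t * real_of_ereal (h c)"
    if "0 < t" "t < 1" "a \<in> edom h" "c \<in> edom h" for a c t
    using comb[of a c "1 - t" t] that assms(1) unfolding eproper_def
    by (cases "h ((1 - t) *\<^sub>R a + t *\<^sub>R c)") auto
  ultimately show ?thesis by (intro convex_onI)
qed

lemma convex_on_gradient_inequality:
  fixes g :: "'a::real_inner \<Rightarrow> real"
  assumes g: "convex_on S g" and c: "c \<in> S" and a: "a \<in> S" and D: "GDERIV g c :> D"
  shows "g c + inner D (a - c) \<le> g a"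
proof -
  define l where "l = (\<lambda>t::real. g (c + t *\<^sub>R (a - c)))"
  have "((\<lambda>t. c + t *\<^sub>R (a - c)) has_derivative (\<lambda>t. t *\<^sub>R (a - c))) (at 0 within {0<..})"
    by (auto intro!: derivative_eq_intros)
  moreover have "(g has_derivative (\<lambda>h. inner h D)) (at (c + 0 *\<^sub>R (a - c)))"
    using D unfolding gderiv_def by simp
  ultimately have "(l has_derivative (\<lambda>t. inner (t *\<^sub>R (a - c)) D)) (at 0 within {0<..})"
    unfolding l_def by (rule has_derivative_compose)
  then have "(l has_field_derivative inner (a - c) D) (at 0 within {0<..})"
    unfolding has_field_derivative_def by (simp add: mult.commute[of _ "inner (a - c) D"])
  then have lim: "((\<lambda>t. (l t - l 0) / (t - 0)) \<longlongrightarrow> inner (a - c) D) (at_right 0)"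
    using has_field_derivative_iff by blast
  have "\<forall>\<^sub>F t in at_right 0. (l t - l 0) / (t - 0) \<le> g a - g c"
    using eventually_at_right_real[of 0 1]
  proof (rule eventually_mono)
    fix t :: real assume t: "t \<in> {0<..<1}"
    have "c + t *\<^sub>R (a - c) = (1 - t) *\<^sub>R c + t *\<^sub>R a" by (simp add: algebra_simps)
    then have "l t \<le> (1 - t) * g c + t * g a"
      unfolding l_def using convex_onD[OF g, of t c a] t c a by simp
    then show "(l t - l 0) / (t - 0) \<le> g a - g c"
      using t by (simp add: l_def divide_simps algebra_simps)
  qed simp
  then have "inner (a - c) D \<le> g a - g c"
    using lim by (intro tendsto_upperbound) auto
  then show ?thesis by (simp add: inner_commute)
qed

lemma egrad_GDERIV:
  assumes "essentially_smooth h" "c \<in> interior (edom h)"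
  shows "GDERIV (\<lambda>w. real_of_ereal (h w)) c :> egrad h c"
proof -
  obtain D where D: "GDERIV (\<lambda>w. real_of_ereal (h w)) c :> D"
    using assms unfolding essentially_smooth_def by blast
  have unique: "D' = D" if "GDERIV (\<lambda>w. real_of_ereal (h w)) c :> D'" for D'
    using has_derivative_unique[OF D[unfolded gderiv_def] that[unfolded gderiv_def]]
    by (metis vector_eq_ldot)
  have "egrad h c = D"
    unfolding egrad_def using D unique by (rule the_equality)
  with D show ?thesis by simp
qed

definition bregman_real :: "('a::real_inner \<Rightarrow> ereal) \<Rightarrow> 'a \<Rightarrow> 'a \<Rightarrow> real" where
  "bregman_real h a c =
     real_of_ereal (h a) - real_of_ereal (h c) - inner (egrad h c) (a - c)"

lemma bregman_eq_bregman_real: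
  assumes "eproper h" "a \<in> edom h" "c \<in> interior (edom h)"
  shows "bregman h a c = ereal (bregman_real h a c)"
  using assms interior_subset[of "edom h"] eproper_edom_eq_ereal[OF assms(1)]
  unfolding bregman_def bregman_real_def by (metis ereal_minus(1) subsetD)

lemma bregman_real_nonneg:
  assumes "eproper h" "econvex h" "essentially_smooth h" "a \<in> edom h" "c \<in> interior (edom h)"
  shows "0 \<le> bregman_real h a c"
  using convex_on_gradient_inequality[OF econvex_convex_on_edom[OF assms(1,2)] _ assms(4)
      egrad_GDERIV[OF assms(3,5)]] assms(5) interior_subset
  unfolding bregman_real_def by fastforce

lemma bregman_real_self [simp]: "bregman_real h a a = 0"
  by (simp add: bregman_real_def)

lemma bregman_real_three_point:
  assumes "egrad h c' = egrad h c - t *\<^sub>R v"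
  shows "t * inner v (a' - a) =
    bregman_real h a c - bregman_real h a c' + bregman_real h a' c' - bregman_real h a' c"
  unfolding bregman_real_def assms
  by (simp add: inner_diff_left inner_diff_right algebra_simps)

lemma cone_dual_cone: "cone (dual_cone C)"
  unfolding cone_def dual_cone_def by auto

lemma zero_in_dual_cone [simp]: "0 \<in> dual_cone C"
  unfolding dual_cone_def by simp

lemma econj_eindicator_neg_cone:
  fixes C :: "'a::real_inner set"
  assumes "cone C" "C \<noteq> {}"
  shows "econj (eindicator (uminus ` C)) = eindicator (dual_cone C)"
proof
  fix y
  let ?g = "eindicator (uminus ` C)"
  have "0 \<in> C"
    using assms cone_contains_0 by blast
  show "econj ?g y = eindicator (dual_cone C) y"
  proof (cases "y \<in> dual_cone C")
    case True
    have "ereal (inner x y) - ?g x \<le> 0" for x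
      using True by (auto simp: eindicator_def dual_cone_def inner_commute)
    then have "econj ?g y \<le> 0"
      unfolding econj_def by (rule SUP_least)
    moreover have "ereal (inner 0 y) - ?g 0 \<le> econj ?g y"
      unfolding econj_def by (rule SUP_upper) simp
    ultimately show ?thesis
      using True \<open>0 \<in> C\<close> by (auto simp: eindicator_def image_iff zero_ereal_def)
  next
    case False
    then obtain c where c: "c \<in> C" "inner y c < 0"
      unfolding dual_cone_def by (auto simp: not_le)
    have "econj ?g y = \<infinity>"
      unfolding econj_def
    proof (rule SUP_PInfty)
      fix n :: nat
      define t where "t = real n / - inner y c"
      have "t \<ge> 0" unfolding t_def using c by (intro divide_nonneg_pos) auto
      then have "- (t *\<^sub>R c) \<in> uminus ` C"
        using assms(1) c unfolding cone_def by blast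
      moreover have "inner (- (t *\<^sub>R c)) y = real n"
        using c unfolding t_def by (simp add: inner_commute)
      ultimately show "\<exists>x\<in>UNIV. ereal (real n) \<le> ereal (inner x y) - ?g x"
        by (intro bexI[of _ "- (t *\<^sub>R c)"]) (auto simp: eindicator_def)
    qed
    then show ?thesis using False by (simp add: eindicator_def)
  qed
qed

lemma esubdiff_eindicator:
  "q \<in> esubdiff (eindicator K) y \<longleftrightarrow> y \<in> K \<and> (\<forall>w\<in>K. inner q (w - y) \<le> 0)"
  unfolding esubdiff_def eindicator_def by auto

lemma infdist_neg_cone_le_inner:
  fixes C :: "'a::euclidean_space set"
  assumes "closed C" "convex C" "cone C" "C \<noteq> {}"
  obtains w where "w \<in> dual_cone C" "norm w \<le> 1" "infdist d (uminus ` C) \<le> inner d w"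
proof -
  let ?K = "uminus ` C"
  have K: "closed ?K" "convex ?K" "?K \<noteq> {}" "cone ?K"
    using assms closed_negations convex_negations by (auto simp: cone_def image_iff)
  define p where "p = closest_point ?K d"
  have "p \<in> ?K"
    unfolding p_def using K by (intro closest_point_in_set)
  have obtuse: "inner (d - p) (z - p) \<le> 0" if "z \<in> ?K" for z
    unfolding p_def using K that by (intro closest_point_dot)
  have "0 \<in> ?K" "2 *\<^sub>R p \<in> ?K"
    using K(3,4) \<open>p \<in> ?K\<close> cone_contains_0 by (auto intro: mem_cone)
  then have orth: "inner (d - p) p = 0"
    using obtuse[of 0] obtuse[of "2 *\<^sub>R p"] by (simp add: algebra_simps)
  have normal: "inner (d - p) c \<ge> 0" if "c \<in> C" for c
    using obtuse[of "- c"] that orth by (simp add: inner_diff_right)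
  define w where "w = (1 / norm (d - p)) *\<^sub>R (d - p)"
  have "w \<in> dual_cone C"
    unfolding dual_cone_def w_def using normal by auto
  moreover have "norm w \<le> 1"
    unfolding w_def by simp
  moreover have "inner d w = norm (d - p)"
  proof -
    have "inner d (d - p) = inner (d - p) (d - p)"
      using orth by (simp add: inner_diff algebra_simps inner_commute)
    then show ?thesis
      unfolding w_def by (cases "d = p") (auto simp: power2_norm_eq_inner[symmetric] power2_eq_square)
  qed
  moreover have "infdist d ?K \<le> norm (d - p)"
    using infdist_le[OF \<open>p \<in> ?K\<close>, of d] by (simp add: dist_norm)
  ultimately show ?thesis using that by auto
qed

lemma linear_max_on_cone:
  assumes "cone K" "ys \<in> K" "\<And>w. w \<in> K \<Longrightarrow> inner d w \<le> inner d ys"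
  shows "inner d ys = 0" and "w \<in> K \<Longrightarrow> inner d w \<le> 0"
proof -
  have "0 \<in> K" "2 *\<^sub>R ys \<in> K"
    using assms(1,2) cone_contains_0 by (auto intro: mem_cone)
  then show "inner d ys = 0"
    using assms(3)[of 0] assms(3)[of "2 *\<^sub>R ys"] by simp
  then show "w \<in> K \<Longrightarrow> inner d w \<le> 0"
    using assms(3) by simp
qed

lemma saddle_point_neg_cone:
  assumes f: "eproper f" and C: "cone C" "C \<noteq> {}"
    and saddle: "saddle_point f (eindicator (uminus ` C)) A b xs ys"
  shows "xs \<in> edom f" and "ys \<in> dual_cone C" and "inner (A *v xs - b) ys = 0"
    and "w \<in> dual_cone C \<Longrightarrow> inner (A *v xs - b) w \<le> 0"
    and "f xs \<le> f z + ereal (inner (A *v z - b) ys)"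
proof -
  let ?L = "lagr f (eindicator (uminus ` C)) A b"
  have L: "?L x w = f x + ereal (inner (A *v x - b) w) - eindicator (dual_cone C) w" for x w
    by (simp add: lagr_def econj_eindicator_neg_cone[OF C])
  have max: "?L xs w \<le> ?L xs ys" and min: "?L xs ys \<le> ?L z ys" for w z
    using saddle unfolding saddle_point_def by auto
  show xs: "xs \<in> edom f"
  proof (rule ccontr)
    assume "xs \<notin> edom f"
    then have "?L xs ys = \<infinity>"
      by (simp add: L edom_def)
    obtain z where z: "z \<in> edom f"
      using f unfolding eproper_def edom_def by blast
    obtain a where "f z = ereal a"
      using eproper_edom_eq_ereal[OF f z] by (rule that)
    then have "?L z ys \<noteq> \<infinity>"
      by (simp add: L eindicator_def)
    with \<open>?L xs ys = \<infinity>\<close> show False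
      using min[of z] by simp
  qed
  obtain r where fxs: "f xs = ereal r"
    using eproper_edom_eq_ereal[OF f xs] by (rule that)
  have Lxs: "?L xs w = ereal (r + inner (A *v xs - b) w)" if "w \<in> dual_cone C" for w
    using that by (simp add: L fxs eindicator_def)
  show ys: "ys \<in> dual_cone C"
  proof (rule ccontr)
    assume "ys \<notin> dual_cone C"
    then have "?L xs ys = -\<infinity>"
      by (simp add: L fxs eindicator_def)
    then show False
      using max[of 0] Lxs[of 0] by simp
  qed
  have "inner (A *v xs - b) w \<le> inner (A *v xs - b) ys" if "w \<in> dual_cone C" for w
    using max[of w] Lxs[OF that] Lxs[OF ys] by simp
  note linear_max_on_cone[OF cone_dual_cone ys this]
  then show slack: "inner (A *v xs - b) ys = 0"
    and "w \<in> dual_cone C \<Longrightarrow> inner (A *v xs - b) w \<le> 0"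
    by auto
  show "f xs \<le> f z + ereal (inner (A *v z - b) ys)"
    using min[of z] Lxs[OF ys] slack fxs ys by (simp add: L eindicator_def)
qed

lemma inner_matrix_vector_transpose:
  "inner ((M::real^'n^'m) *v z) w = inner z (transpose M *v w)"
  by (metis dot_lmul_matrix inner_commute transpose_matrix_vector)

lemma kkt_neg_cone_lagrangian_gap:
  assumes C: "cone C" "C \<noteq> {}"
    and kkt: "(v', u') \<in> kkt f (eindicator (uminus ` C)) A b s' y'"
  shows "s' \<in> edom f" and "y' \<in> dual_cone C"
    and "z \<in> edom f \<Longrightarrow> (\<And>w. w \<in> dual_cone C \<Longrightarrow> inner (A *v z - b) w \<le> 0) \<Longrightarrow>
         w \<in> dual_cone C \<Longrightarrow> real_of_ereal (f s') - real_of_ereal (f z) + inner (A *v s' - b) w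
           \<le> inner v' (s' - z) + inner u' (y' - w)"
proof -
  obtain p q where v': "v' = p + transpose A *v y'" and u': "u' = q + b - A *v s'"
    and p: "p \<in> esubdiff f s'" and q: "q \<in> esubdiff (eindicator (dual_cone C)) y'"
    using kkt unfolding kkt_def econj_eindicator_neg_cone[OF C] by blast
  obtain r where r: "f s' = ereal r"
    using p unfolding esubdiff_def by (cases "f s'") auto
  then show "s' \<in> edom f"
    unfolding edom_def by simp
  show y': "y' \<in> dual_cone C"
    using q by (simp add: esubdiff_eindicator)
  assume z: "z \<in> edom f" "\<And>w. w \<in> dual_cone C \<Longrightarrow> inner (A *v z - b) w \<le> 0"
    and w: "w \<in> dual_cone C"
  have "f z \<ge> ereal (r + inner p (z - s'))"
    using p r unfolding esubdiff_def by auto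
  moreover have "f z < \<infinity>"
    using z(1) unfolding edom_def by simp
  ultimately obtain t where t: "f z = ereal t" "r + inner p (z - s') \<le> t"
    by (cases "f z") auto
  have "inner q (w - y') \<le> 0"
    using q w by (simp add: esubdiff_eindicator)
  moreover have "inner (A *v z - b) y' \<le> 0"
    using z(2) y' .
  moreover have "inner (transpose A *v y') (s' - z) = inner (A *v s' - A *v z) y'"
    by (metis inner_matrix_vector_transpose inner_commute matrix_vector_mult_diff_distrib)
  ultimately show "real_of_ereal (f s') - real_of_ereal (f z) + inner (A *v s' - b) w
      \<le> inner v' (s' - z) + inner u' (y' - w)"
    using t unfolding r v' u'
    by (simp add: inner_add_left inner_diff_left inner_diff_right algebra_simps)
qed

lemma gap_infeasibility_bound:
  fixes d ys :: "'a::euclidean_space" and B :: "'a \<Rightarrow> ereal" and a :: ereal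
  assumes C: "closed C" "convex C" "cone C" "C \<noteq> {}" and S: "0 < S"
    and ys: "ys \<in> dual_cone C" and lower: "0 \<le> F + inner d ys"
    and upper: "\<And>w. w \<in> dual_cone C \<Longrightarrow> ereal (S * (F + inner d w)) \<le> a + B w"
  shows "max (ereal \<bar>F\<bar>) (ereal (infdist d (uminus ` C)))
    \<le> (a + (SUP w \<in> dual_cone C \<inter> cball 0 (2 * norm ys + 1). B w)) / ereal S"
proof -
  let ?W = "dual_cone C \<inter> cball 0 (2 * norm ys + 1)"
  have bound: "ereal X \<le> (a + (SUP w\<in>?W. B w)) / ereal S" if "w \<in> ?W" "X \<le> F + inner d w" for X w
  proof -
    have "ereal S * ereal X \<le> ereal (S * (F + inner d w))"
      using S that(2) by (simp add: mult_left_mono)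
    also have "\<dots> \<le> a + B w"
      using that(1) upper by blast
    also have "\<dots> \<le> a + (SUP w\<in>?W. B w)"
      using that(1) by (intro add_left_mono SUP_upper)
    finally show ?thesis
      using S by (simp add: ereal_le_divide_pos)
  qed
  txt \<open>The test points 0 and 2 ys bound F from above and, via the lower bound, from below;
    ys + w1 bounds the infeasibility.\<close>
  obtain w1 where w1: "w1 \<in> dual_cone C" "norm w1 \<le> 1" "infdist d (uminus ` C) \<le> inner d w1"
    using infdist_neg_cone_le_inner[OF C] .
  have "0 \<in> ?W" and "2 *\<^sub>R ys \<in> ?W"
    using ys mem_cone[OF cone_dual_cone ys, of 2] by auto
  moreover have "ys + w1 \<in> ?W"
  proof -
    have "norm (ys + w1) \<le> 2 * norm ys + 1"
      using norm_triangle_ineq[of ys w1] w1(2) norm_ge_zero[of ys] by linarith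
    then show ?thesis
      using ys w1(1) by (auto simp: dual_cone_def inner_add_left)
  qed
  ultimately show ?thesis
    using bound[of 0 "\<bar>F\<bar>"] bound[of "2 *\<^sub>R ys" "\<bar>F\<bar>"] bound[of "ys + w1" "infdist d (uminus ` C)"]
      lower w1(3) by (cases "0 \<le> F") (auto simp: inner_add_right)
qed

locale bregman_proximal_alm =
  fixes f :: "real^'n \<Rightarrow> ereal" and psi :: "real^'n \<Rightarrow> ereal" and phi :: "real^'m \<Rightarrow> ereal"
    and A :: "real^'n^'m" and b :: "real^'m" and C :: "(real^'m) set"
    and sigma rho :: "nat \<Rightarrow> real"
    and s x v :: "nat \<Rightarrow> real^'n" and y u :: "nat \<Rightarrow> real^'m"
  assumes f: "eproper f" "econvex f"
    and cone: "cone C" "C \<noteq> {}"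
    and dual_cone_dom: "dual_cone C \<subseteq> edom phi"
    and psi: "eproper psi" "econvex psi" "essentially_smooth psi"
    and phi: "eproper phi" "econvex phi" "essentially_smooth phi"
    and x0: "x 0 \<in> interior (edom psi)" and y0: "y 0 \<in> interior (edom phi)"
    and sigma_pos: "\<And>k. sigma k > 0"
    and rho: "\<And>k. 0 \<le> rho k" "\<And>k. rho k \<le> 1"
    and s_dom: "\<And>k. s k \<in> edom psi"
    and kkt_step: "\<And>k. (v k, u k) \<in> kkt f (eindicator (uminus ` C)) A b (s k) (y (Suc k))"
    and x_update: "\<And>k. x (Suc k) \<in> interior (edom psi) \<and>
                    egrad psi (x (Suc k)) = egrad psi (x k) - sigma k *\<^sub>R v k"
    and y_update: "\<And>k. y (Suc k) \<in> interior (edom phi) \<and>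
                    egrad phi (y (Suc k)) = egrad phi (y k) - sigma k *\<^sub>R u k"
    and inexact: "\<And>k. bregman psi (s k) (x (Suc k))
                     \<le> ereal (rho k) * (bregman psi (s k) (x k) + bregman phi (y (Suc k)) (y k))"
begin

lemma x_interior: "x k \<in> interior (edom psi)"
  by (cases k) (use x0 x_update in auto)

lemma y_interior: "y k \<in> interior (edom phi)"
  by (cases k) (use y0 y_update in auto)

lemma y_dual_cone: "y (Suc k) \<in> dual_cone C"
  using kkt_neg_cone_lagrangian_gap(2)[OF cone kkt_step] by blast

lemma inexact_error_le:
  "bregman_real psi (s k) (x (Suc k))
     \<le> bregman_real psi (s k) (x k) + bregman_real phi (y (Suc k)) (y k)"
proof -
  have y': "y (Suc k) \<in> edom phi"
    using y_dual_cone dual_cone_dom by blast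
  have "0 \<le> bregman_real psi (s k) (x k) + bregman_real phi (y (Suc k)) (y k)"
    using bregman_real_nonneg[OF psi s_dom x_interior] bregman_real_nonneg[OF phi y' y_interior]
    by simp
  then have "rho k * (bregman_real psi (s k) (x k) + bregman_real phi (y (Suc k)) (y k))
      \<le> bregman_real psi (s k) (x k) + bregman_real phi (y (Suc k)) (y k)"
    using rho by (rule mult_left_le_one_le)
  moreover have "bregman_real psi (s k) (x (Suc k))
      \<le> rho k * (bregman_real psi (s k) (x k) + bregman_real phi (y (Suc k)) (y k))"
    using inexact[of k]
    by (simp add: bregman_eq_bregman_real psi(1) phi(1) s_dom x_interior y' y_interior)
  ultimately show ?thesis
    by linarith
qed

lemma lagrangian_gap_step:
  assumes z: "z \<in> edom psi" "z \<in> edom f" "\<And>w. w \<in> dual_cone C \<Longrightarrow> inner (A *v z - b) w \<le> 0"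
    and w: "w \<in> dual_cone C"
  shows "sigma k * (real_of_ereal (f (s k)) - real_of_ereal (f z) + inner (A *v s k - b) w)
    \<le> (bregman_real psi z (x k) + bregman_real phi w (y k))
       - (bregman_real psi z (x (Suc k)) + bregman_real phi w (y (Suc k)))"
proof -
  have "sigma k * (real_of_ereal (f (s k)) - real_of_ereal (f z) + inner (A *v s k - b) w)
      \<le> sigma k * inner (v k) (s k - z) + sigma k * inner (u k) (y (Suc k) - w)"
    using kkt_neg_cone_lagrangian_gap(3)[OF cone kkt_step z(2,3) w] sigma_pos[of k]
    by (simp add: distrib_left[symmetric])
  also have "sigma k * inner (v k) (s k - z)
      = bregman_real psi z (x k) - bregman_real psi z (x (Suc k))
        + bregman_real psi (s k) (x (Suc k)) - bregman_real psi (s k) (x k)"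
    using x_update by (intro bregman_real_three_point) simp
  also have "sigma k * inner (u k) (y (Suc k) - w)
      = bregman_real phi w (y k) - bregman_real phi w (y (Suc k))
        - bregman_real phi (y (Suc k)) (y k)"
    using bregman_real_three_point[of phi "y (Suc k)" "y k" "sigma k" "u k" "y (Suc k)" w] y_update
    by simp
  finally show ?thesis
    using inexact_error_le[of k] by simp
qed

lemma lagrangian_gap_sum:
  assumes z: "z \<in> edom psi" "z \<in> edom f" "\<And>w. w \<in> dual_cone C \<Longrightarrow> inner (A *v z - b) w \<le> 0"
    and w: "w \<in> dual_cone C"
  shows "(\<Sum>k\<le>K. sigma k * (real_of_ereal (f (s k)) - real_of_ereal (f z) + inner (A *v s k - b) w))
    \<le> bregman_real psi z (x 0) + bregman_real phi w (y 0)"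
proof -
  let ?E = "\<lambda>k. bregman_real psi z (x k) + bregman_real phi w (y k)"
  have "(\<Sum>k\<le>K. sigma k * (real_of_ereal (f (s k)) - real_of_ereal (f z) + inner (A *v s k - b) w))
      \<le> (\<Sum>k\<le>K. ?E k - ?E (Suc k))"
    by (rule sum_mono) (rule lagrangian_gap_step[OF z w])
  also have "\<dots> = ?E 0 - ?E (Suc K)"
    by (rule sum_telescope)
  also have "\<dots> \<le> ?E 0"
    using w dual_cone_dom bregman_real_nonneg[OF psi z(1) x_interior, of "Suc K"]
      bregman_real_nonneg[OF phi _ y_interior, of w "Suc K"] by auto
  finally show ?thesis .
qed

lemma ergodic_average:
  fixes K :: nat
  defines "S \<equiv> \<Sum>k\<le>K. sigma k"
    and "sK \<equiv> (1 / (\<Sum>k\<le>K. sigma k)) *\<^sub>R (\<Sum>k\<le>K. sigma k *\<^sub>R s k)"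
  shows "0 < S" and "sK \<in> edom f"
    and "S * (real_of_ereal (f sK) + inner (A *v sK - b) w)
      \<le> (\<Sum>k\<le>K. sigma k * (real_of_ereal (f (s k)) + inner (A *v s k - b) w))"
proof -
  show S: "0 < S"
    unfolding S_def using sigma_pos by (intro sum_pos) auto
  have weights: "(\<Sum>k\<le>K. sigma k / S) = 1" "\<And>k. 0 \<le> sigma k / S"
    using S sigma_pos[THEN less_imp_le] by (auto simp: S_def simp flip: sum_divide_distrib)
  have sK: "sK = (\<Sum>k\<le>K. (sigma k / S) *\<^sub>R s k)"
    by (simp add: sK_def S_def scaleR_sum_right)
  have s_f: "s k \<in> edom f" for k
    using kkt_neg_cone_lagrangian_gap(1)[OF cone kkt_step] .
  have conv: "convex_on (edom f) (\<lambda>z. real_of_ereal (f z))"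
    using econvex_convex_on_edom[OF f] .
  show "sK \<in> edom f"
    unfolding sK using convex_on_imp_convex[OF conv] weights s_f by (intro convex_sum) auto
  have "real_of_ereal (f sK) \<le> (\<Sum>k\<le>K. (sigma k / S) * real_of_ereal (f (s k)))"
    unfolding sK using conv weights s_f by (intro convex_on_sum) auto
  moreover have "inner (A *v sK - b) w = (\<Sum>k\<le>K. (sigma k / S) * inner (A *v s k - b) w)"
  proof -
    have "A *v sK = (\<Sum>k\<le>K. (sigma k / S) *\<^sub>R (A *v s k))"
      unfolding sK by (simp add: linear_sum[OF matrix_vector_mul_linear] matrix_vector_mult_scaleR o_def)
    then have "inner (A *v sK - b) w
        = (\<Sum>k\<le>K. (sigma k / S) * inner (A *v s k) w) - (\<Sum>k\<le>K. sigma k / S) * inner b w"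
      using weights(1) by (simp add: inner_sum_left inner_diff_left)
    then show ?thesis
      by (simp add: inner_diff_left right_diff_distrib sum_subtractf sum_distrib_right)
  qed
  ultimately have "real_of_ereal (f sK) + inner (A *v sK - b) w
      \<le> (\<Sum>k\<le>K. sigma k * (real_of_ereal (f (s k)) + inner (A *v s k - b) w)) / S"
    by (simp add: distrib_left sum.distrib add_divide_distrib flip: sum_divide_distrib)
  then show "S * (real_of_ereal (f sK) + inner (A *v sK - b) w)
      \<le> (\<Sum>k\<le>K. sigma k * (real_of_ereal (f (s k)) + inner (A *v s k - b) w))"
    using S by (simp add: pos_le_divide_eq mult.commute)
qed

lemma ergodic_lagrangian_gap:
  fixes K :: nat
  assumes z: "z \<in> edom psi" "z \<in> edom f" "\<And>w. w \<in> dual_cone C \<Longrightarrow> inner (A *v z - b) w \<le> 0"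
    and w: "w \<in> dual_cone C"
  defines "S \<equiv> \<Sum>k\<le>K. sigma k"
    and "sK \<equiv> (1 / (\<Sum>k\<le>K. sigma k)) *\<^sub>R (\<Sum>k\<le>K. sigma k *\<^sub>R s k)"
  shows "ereal (S * (real_of_ereal (f sK) - real_of_ereal (f z) + inner (A *v sK - b) w))
    \<le> bregman psi z (x 0) + bregman phi w (y 0)"
proof -
  have "(\<Sum>k\<le>K. sigma k * real_of_ereal (f z)) = S * real_of_ereal (f z)"
    by (simp add: S_def sum_distrib_right)
  then have "S * (real_of_ereal (f sK) - real_of_ereal (f z) + inner (A *v sK - b) w)
      = S * (real_of_ereal (f sK) + inner (A *v sK - b) w) - (\<Sum>k\<le>K. sigma k * real_of_ereal (f z))"
    by (simp add: algebra_simps)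
  also have "\<dots> \<le> (\<Sum>k\<le>K. sigma k * (real_of_ereal (f (s k)) + inner (A *v s k - b) w))
      - (\<Sum>k\<le>K. sigma k * real_of_ereal (f z))"
    using ergodic_average(3) unfolding S_def sK_def by simp
  also have "\<dots> = (\<Sum>k\<le>K. sigma k * (real_of_ereal (f (s k)) - real_of_ereal (f z) + inner (A *v s k - b) w))"
    by (simp add: algebra_simps sum_subtractf sum.distrib)
  also have "\<dots> \<le> bregman_real psi z (x 0) + bregman_real phi w (y 0)"
    by (rule lagrangian_gap_sum[OF z w])
  finally show ?thesis
    using w dual_cone_dom
    by (simp add: bregman_eq_bregman_real psi(1) phi(1) z(1) x0 y0 subset_iff)
qed

lemma ergodic_rate:
  fixes K :: nat
  assumes C: "closed C" "convex C"
    and saddle: "saddle_point f (eindicator (uminus ` C)) A b xs ys" and xs: "xs \<in> edom psi"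
  defines "S \<equiv> \<Sum>k\<le>K. sigma k"
    and "sK \<equiv> (1 / (\<Sum>k\<le>K. sigma k)) *\<^sub>R (\<Sum>k\<le>K. sigma k *\<^sub>R s k)"
  shows "max \<bar>f sK - f xs\<bar> (ereal (infdist (A *v sK - b) (uminus ` C)))
    \<le> (bregman psi xs (x 0) + (SUP w\<in>dual_cone C \<inter> cball 0 (2 * norm ys + 1). bregman phi w (y 0)))
       / ereal S"
proof -
  note xs_ys = saddle_point_neg_cone[OF f(1) cone saddle]
  obtain r where r: "f xs = ereal r"
    using eproper_edom_eq_ereal[OF f(1) xs_ys(1)] by (rule that)
  obtain a where a: "f sK = ereal a"
    using eproper_edom_eq_ereal[OF f(1) ergodic_average(2)[of K, folded sK_def]] by (rule that)
  have "0 \<le> a - r + inner (A *v sK - b) ys"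
    using xs_ys(5)[of sK] a r by simp
  moreover have "ereal (S * (a - r + inner (A *v sK - b) w))
      \<le> bregman psi xs (x 0) + bregman phi w (y 0)" if "w \<in> dual_cone C" for w
    using ergodic_lagrangian_gap[OF xs xs_ys(1) xs_ys(4) that, of K] a r
    unfolding S_def sK_def by simp
  ultimately have "max (ereal \<bar>a - r\<bar>) (ereal (infdist (A *v sK - b) (uminus ` C)))
      \<le> (bregman psi xs (x 0) + (SUP w\<in>dual_cone C \<inter> cball 0 (2 * norm ys + 1). bregman phi w (y 0)))
         / ereal S"
    by (rule gap_infeasibility_bound[OF C cone ergodic_average(1)[of K, folded S_def] xs_ys(2)])
  then show ?thesis
    using a r by simp
qed

end

theorem mainTheorem17:
  fixes f :: "real^'n \<Rightarrow> ereal" and psi :: "real^'n \<Rightarrow> ereal"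
    and phi :: "real^'m \<Rightarrow> ereal"
    and A :: "real^'n^'m" and b :: "real^'m" and C :: "(real^'m) set"
    and sigma rho :: "nat \<Rightarrow> real" and sig :: real
    and s x v :: "nat \<Rightarrow> real^'n" and y u :: "nat \<Rightarrow> real^'m"
    and xs :: "real^'n" and ys :: "real^'m"
  assumes f: "Gamma0 f"
    and C: "closed C" "convex C" "cone C" "C \<noteq> {}"
    and Cdual: "dual_cone C \<subseteq> edom phi"
    and psi: "Legendre psi" and phi: "Legendre phi"
    and domT: "\<exists>x0 y0. x0 \<in> interior (edom psi) \<and> y0 \<in> interior (edom phi) \<and>
                      kkt f (eindicator (uminus ` C)) A b x0 y0 \<noteq> {}"
    and x0: "x 0 \<in> interior (edom psi)" and y0: "y 0 \<in> interior (edom phi)"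
    and sig: "sig > 0" "\<And>k. sigma k \<ge> sig"
    and rho: "\<And>k. 0 \<le> rho k \<and> rho k < 1"
    and s_dom: "\<And>k. s k \<in> edom psi"
    and vu: "\<And>k. (v k, u k) \<in> kkt f (eindicator (uminus ` C)) A b (s k) (y (Suc k))"
    and xupd: "\<And>k. x (Suc k) \<in> interior (edom psi) \<and>
                    egrad psi (x (Suc k)) = egrad psi (x k) - sigma k *\<^sub>R v k"
    and yupd: "\<And>k. y (Suc k) \<in> interior (edom phi) \<and>
                    egrad phi (y (Suc k)) = egrad phi (y k) - sigma k *\<^sub>R u k"
    and inexact: "\<And>k. bregman psi (s k) (x (Suc k))
                     \<le> ereal (rho k) * (bregman psi (s k) (x k) + bregman phi (y (Suc k)) (y k))"
    and saddle: "saddle_point f (eindicator (uminus ` C)) A b xs ys"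
    and xs_dom: "xs \<in> edom psi" and ys_dom: "ys \<in> edom phi"
  shows "\<forall>K. let S = (\<Sum>k\<le>K. sigma k);
               sK = (1 / S) *\<^sub>R (\<Sum>k\<le>K. sigma k *\<^sub>R s k);
               R = 2 * norm ys + 1
           in max \<bar>f sK - f xs\<bar> (ereal (infdist (A *v sK - b) (uminus ` C)))
              \<le> (bregman psi xs (x 0)
                  + (SUP w\<in>dual_cone C \<inter> cball 0 R. bregman phi w (y 0))) / ereal S"
proof -
  have sigma_pos: "0 < sigma k" and rho': "0 \<le> rho k" "rho k \<le> 1" for k
    using sig(1) sig(2)[of k] rho[of k] by auto
  interpret bregman_proximal_alm f psi phi A b C sigma rho s x v y u
    using f psi phi C(3,4) Cdual x0 y0 sigma_pos rho' s_dom vu xupd yupd inexact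
    by unfold_locales (simp_all add: Gamma0_def Legendre_def)
  show ?thesis
    using ergodic_rate[OF C(1,2) saddle xs_dom] by (simp add: Let_def)
qed

end
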